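(* Let $\mathcal I$ index a finite set of strategies for the iterated Prisoner's Dilemma (payoffs normalized with $T=1$, $S=0$). (a) Suppose the strategy indexed by $i^*$ is a memory-one vector $\mathbf p^{i^*}=(p_1,p_2,0,0)$ with $p_1,p_2<1$, together with any initial play. If for no other $j\in\mathcal I$ is $\mathbf p^j$ firm, then $i^*$ is an ESS for the game $\{A_{ij}\}$. (b) Suppose the strategy indexed by $i^*$ is a memory-one vector $\mathbf p^{i^*}=(1,p_2,0,0)$ with $p_2<1$, together with any initial play. If for no other $j\in\mathcal I$ is $\mathbf p^j$ either agreeable or firm, then $i^*$ is an ESS for the game $\{A_{ij}\}$. (c) Assume $P<\tfrac12$. Suppose the strategy indexed by $i^*$ is a firm, non-exceptional zero-determinant strategy with $\bar\alpha<0$, together with any initial play. If for no other $j\in\mathcal I$ is $\mathbf p^j$ firm, then $i^*$ is an ESS for the game $\{A_{ij}\}$.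
   Context: Iterated Prisoner's Dilemma with normalized payoffs $T=1>R>P>S=0$, $2R>1$; outcomes ordered $cc,cd,dc,dd$ (own play first); payoff vectors $\mathbf S_X=(R,0,1,P)$, $\mathbf S_Y=(R,1,0,P)$, $\mathbf 1=(1,1,1,1)$, $\mathbf e_{23}=(0,1,1,0)$. A memory-one strategy vector is $\mathbf p\in[0,1]^4$, $p_i$ being the probability of playing $c$ after the $i$-th outcome, outcomes labeled from the player's own perspective; it is agreeable if $p_1=1$ and firm if $p_4=0$. A strategy is such a vector together with an initial play. Its X Press-Dyson vector $\mathbf p-(1,1,0,0)$ decomposes uniquely as $\alpha\mathbf S_X+\beta\mathbf S_Y+\gamma\mathbf 1+\delta\mathbf e_{23}$; $\mathbf p$ is a non-exceptional zero-determinant strategy if $\delta=0$ and $\gamma>0$, and then $\bar\alpha=\alpha/\gamma$. For $i,j\in\mathcal I$, $A_{ij}$ is the long-run (Cesàro-limit) average payoff of X when X uses strategy $i$ and Y uses strategy $j$. $i^*$ is an evolutionarily stable strategy (ESS) if $A_{ji^*}<A_{i^*i^*}$ for all $j\ne i^*$. *)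

theory Defs
  imports Complex_Main
begin

text \<open>Outcomes of one round, labelled from the focal player's perspective
  (own play first): cc, cd, dc, dd.\<close>
datatype outcome = CC | CD | DC | DD

lemma UNIV_outcome: "(UNIV :: outcome set) = {CC, CD, DC, DD}"
  using outcome.exhaust by auto

instance outcome :: finite
  by standard (simp add: UNIV_outcome)

text \<open>A memory-one strategy vector: probability of cooperating after each outcome.\<close>
type_synonym memvec = "outcome \<Rightarrow> real"

text \<open>A strategy: a memory-one vector together with an initial play (True = c, False = d).\<close>
type_synonym strategy = "memvec \<times> bool"

definition memvec_ok :: "memvec \<Rightarrow> bool" where
  "memvec_ok p \<longleftrightarrow> (\<forall>s. 0 \<le> p s \<and> p s \<le> 1)"

definition agreeable :: "memvec \<Rightarrow> bool" where
  "agreeable p \<longleftrightarrow> p CC = 1"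

definition firm :: "memvec \<Rightarrow> bool" where
  "firm p \<longleftrightarrow> p DD = 0"

fun own_c :: "outcome \<Rightarrow> bool" where
  "own_c CC = True" | "own_c CD = True" | "own_c DC = False" | "own_c DD = False"

fun other_c :: "outcome \<Rightarrow> bool" where
  "other_c CC = True" | "other_c CD = False" | "other_c DC = True" | "other_c DD = False"

fun swap_out :: "outcome \<Rightarrow> outcome" where
  "swap_out CC = CC" | "swap_out CD = DC" | "swap_out DC = CD" | "swap_out DD = DD"

definition mk_outcome :: "bool \<Rightarrow> bool \<Rightarrow> outcome" where
  "mk_outcome a b = (if a then (if b then CC else CD) else (if b then DC else DD))"

definition trans_prob :: "memvec \<Rightarrow> memvec \<Rightarrow> outcome \<Rightarrow> outcome \<Rightarrow> real" where
  "trans_prob p q s t =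
     (if own_c t then p s else 1 - p s) *
     (if other_c t then q (swap_out s) else 1 - q (swap_out s))"

fun outcome_dist :: "strategy \<Rightarrow> strategy \<Rightarrow> nat \<Rightarrow> outcome \<Rightarrow> real" where
  "outcome_dist sx sy 0 s = (if s = mk_outcome (snd sx) (snd sy) then 1 else 0)"
| "outcome_dist sx sy (Suc n) t =
     (\<Sum>s\<in>UNIV. outcome_dist sx sy n s * trans_prob (fst sx) (fst sy) s t)"

fun S_X :: "real \<Rightarrow> real \<Rightarrow> outcome \<Rightarrow> real" where
  "S_X R P CC = R" | "S_X R P CD = 0" | "S_X R P DC = 1" | "S_X R P DD = P"

fun S_Y :: "real \<Rightarrow> real \<Rightarrow> outcome \<Rightarrow> real" where
  "S_Y R P CC = R" | "S_Y R P CD = 1" | "S_Y R P DC = 0" | "S_Y R P DD = P"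

fun e23 :: "outcome \<Rightarrow> real" where
  "e23 CC = 0" | "e23 CD = 1" | "e23 DC = 1" | "e23 DD = 0"

definition avg_payoff :: "real \<Rightarrow> real \<Rightarrow> strategy \<Rightarrow> strategy \<Rightarrow> real" where
  "avg_payoff R P sx sy =
     lim (\<lambda>N. (\<Sum>n<N. \<Sum>s\<in>UNIV. outcome_dist sx sy n s * S_X R P s) / real N)"

definition press_dyson :: "memvec \<Rightarrow> outcome \<Rightarrow> real" where
  "press_dyson p s = p s - (if own_c s then 1 else 0)"

definition nonexc_ZD_abar :: "real \<Rightarrow> real \<Rightarrow> memvec \<Rightarrow> real \<Rightarrow> bool" where
  "nonexc_ZD_abar R P p abar \<longleftrightarrow>
     (\<exists>\<alpha> \<beta> \<gamma> \<delta>. (\<forall>s. press_dyson p s = \<alpha> * S_X R P s + \<beta> * S_Y R P s + \<gamma> + \<delta> * e23 s)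
        \<and> \<delta> = 0 \<and> \<gamma> > 0 \<and> abar = \<alpha> / \<gamma>)"

definition ESS :: "'i set \<Rightarrow> ('i \<Rightarrow> 'i \<Rightarrow> real) \<Rightarrow> 'i \<Rightarrow> bool" where
  "ESS I A istar \<longleftrightarrow> (\<forall>j\<in>I. j \<noteq> istar \<longrightarrow> A j istar < A istar istar)"

end

theory Submission
  imports Defs "HOL-Analysis.Analysis"
begin

text \<open>The Cesaro averages of the transition matrix of a match converge, and their limit rows are
  stationary distributions \<open>\<pi>\<close>, so every \<open>A\<^sub>i\<^sub>j\<close> is an expected payoff under some stationary
  \<open>\<pi>\<close>. Stationarity gives the Press-Dyson identities: \<open>\<pi>\<close> is orthogonal to the Press-Dyson vector
  of either player. Against a sticky defector, a resident that keeps defecting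
  once it has defected (\<open>p\<^sub>3 = p\<^sub>4 = 0\<close>), the resident's identity leaves the mutant's stationary mass on \<open>cd\<close>
  and \<open>dd\<close> only; a non-firm mutant cannot stay in \<open>dd\<close> for ever, so it earns less than \<open>P\<close>,
  whereas the resident earns \<open>P\<close> (in case (b) \<open>R\<close> or \<open>P\<close>) against itself. A firm zero-determinant
  resident enforces \<open>\<alpha> s\<^sub>Y + \<beta> s\<^sub>X + \<gamma> = 0\<close> with \<open>\<gamma> = -(\<alpha> + \<beta>) P\<close>; for \<open>\<alpha> < 0\<close> and
  \<open>P < 1/2\<close> this forces \<open>s\<^sub>X < P\<close> unless the play is absorbed in \<open>dd\<close>, and \<open>s\<^sub>X = s\<^sub>Y = P\<close>
  in self-play.\<close>

section \<open>Cesaro averages of finite stochastic matrices\<close>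

lemma tendsto_of_bounded_unique_subseq_limit:
  fixes X :: "nat \<Rightarrow> 'a::heine_borel"
  assumes bdd: "bounded (range X)"
    and unique: "\<And>r l. strict_mono r \<Longrightarrow> (X \<circ> r) \<longlonglongrightarrow> l \<Longrightarrow> l = L"
  shows "X \<longlonglongrightarrow> L"
proof (rule ccontr)
  assume "\<not> X \<longlonglongrightarrow> L"
  then obtain e where e: "e > 0" "\<not> eventually (\<lambda>n. dist (X n) L < e) sequentially"
    unfolding tendsto_iff by blast
  from not_eventually_sequentiallyD[OF e(2)] obtain q :: "nat \<Rightarrow> nat"
    where q: "strict_mono q" "\<And>n. \<not> dist (X (q n)) L < e" by auto
  have "bounded (range (X \<circ> q))"
    by (rule bounded_subset[OF bdd]) auto
  then obtain r l where r: "strict_mono r" "((X \<circ> q) \<circ> r) \<longlonglongrightarrow> l"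
    using bounded_imp_convergent_subsequence by blast
  have "l = L"
    using unique[of "q \<circ> r" l] r q(1) by (simp add: strict_mono_o o_assoc)
  with r e(1) obtain n where "dist (X (q (r n))) L < e"
    unfolding tendsto_iff by (auto simp: eventually_sequentially)
  with q(2) show False by blast
qed

definition mat_mult :: "('a::finite \<Rightarrow> 'a \<Rightarrow> real) \<Rightarrow> ('a \<Rightarrow> 'a \<Rightarrow> real) \<Rightarrow> 'a \<Rightarrow> 'a \<Rightarrow> real"
  where "mat_mult A B s t = (\<Sum>k\<in>UNIV. A s k * B k t)"

definition mat_one :: "'a::finite \<Rightarrow> 'a \<Rightarrow> real"
  where "mat_one s t = (if s = t then 1 else 0)"

fun mat_pow :: "('a::finite \<Rightarrow> 'a \<Rightarrow> real) \<Rightarrow> nat \<Rightarrow> 'a \<Rightarrow> 'a \<Rightarrow> real" where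
  "mat_pow T 0 = mat_one"
| "mat_pow T (Suc n) = mat_mult (mat_pow T n) T"

definition cesaro :: "('a::finite \<Rightarrow> 'a \<Rightarrow> real) \<Rightarrow> nat \<Rightarrow> 'a \<Rightarrow> 'a \<Rightarrow> real"
  where "cesaro T N s t = (\<Sum>n<N. mat_pow T n s t) / real N"

lemma mat_mult_assoc: "mat_mult (mat_mult A B) C = mat_mult A (mat_mult B C)"
  unfolding mat_mult_def
  by (auto simp: fun_eq_iff sum_distrib_left sum_distrib_right mult.assoc intro: sum.swap)

lemma mat_mult_one_left [simp]: "mat_mult mat_one A = A"
  and mat_mult_one_right [simp]: "mat_mult A mat_one = A"
  by (simp_all add: fun_eq_iff mat_mult_def mat_one_def if_distrib if_distribR cong: if_cong)

lemma mat_pow_Suc_left: "mat_pow T (Suc n) = mat_mult T (mat_pow T n)"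
  by (induction n) (simp_all add: mat_mult_assoc)

lemma mat_mult_sum_left: "mat_mult (\<lambda>s t. \<Sum>n\<in>A. F n s t) B s t = (\<Sum>n\<in>A. mat_mult (F n) B s t)"
  unfolding mat_mult_def by (simp add: sum_distrib_right) (rule sum.swap)

lemma mat_mult_sum_right: "mat_mult B (\<lambda>s t. \<Sum>n\<in>A. F n s t) s t = (\<Sum>n\<in>A. mat_mult B (F n) s t)"
  unfolding mat_mult_def by (simp add: sum_distrib_left) (rule sum.swap)

lemma mat_mult_divide_left: "mat_mult (\<lambda>s t. F s t / c) B s t = mat_mult F B s t / c"
  and mat_mult_divide_right: "mat_mult B (\<lambda>s t. F s t / c) s t = mat_mult B F s t / c"
  unfolding mat_mult_def by (simp_all add: sum_divide_distrib)

lemma cesaro_eq: "cesaro T N = (\<lambda>s t. (\<Sum>n<N. mat_pow T n s t) / real N)"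
  by (simp add: fun_eq_iff cesaro_def)

lemma cesaro_mult_diff:
  "mat_mult (cesaro T N) T s t - cesaro T N s t = (mat_pow T N s t - mat_one s t) / real N"
  "mat_mult T (cesaro T N) s t - cesaro T N s t = (mat_pow T N s t - mat_one s t) / real N"
proof -
  have tele: "(\<Sum>n<N. mat_pow T (Suc n) s t - mat_pow T n s t) = mat_pow T N s t - mat_one s t"
    by (subst sum_lessThan_telescope) simp
  have "mat_mult (cesaro T N) T s t = (\<Sum>n<N. mat_pow T (Suc n) s t) / real N"
    by (simp add: cesaro_eq mat_mult_divide_left mat_mult_sum_left)
  with tele show "mat_mult (cesaro T N) T s t - cesaro T N s t = (mat_pow T N s t - mat_one s t) / real N"
    by (simp add: cesaro_def diff_divide_distrib[symmetric] sum_subtractf del: mat_pow.simps)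
  have "mat_mult T (cesaro T N) s t = (\<Sum>n<N. mat_pow T (Suc n) s t) / real N"
    by (simp add: cesaro_eq mat_mult_divide_right mat_mult_sum_right mat_pow_Suc_left del: mat_pow.simps)
  with tele show "mat_mult T (cesaro T N) s t - cesaro T N s t = (mat_pow T N s t - mat_one s t) / real N"
    by (simp add: cesaro_def diff_divide_distrib[symmetric] sum_subtractf del: mat_pow.simps)
qed

lemma mat_mult_invariant_cesaro:
  assumes "N > 0"
  shows "mat_mult L T = L \<Longrightarrow> mat_mult L (cesaro T N) = L"
    and "mat_mult T L = L \<Longrightarrow> mat_mult (cesaro T N) L = L"
proof -
  assume "mat_mult L T = L"
  then have "mat_mult L (mat_pow T n) = L" for n
    by (induction n) (simp, simp add: mat_pow_Suc_left mat_mult_assoc[symmetric] del: mat_pow.simps)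
  with assms show "mat_mult L (cesaro T N) = L"
    by (simp add: fun_eq_iff cesaro_eq mat_mult_divide_right mat_mult_sum_right del: mat_pow.simps)
next
  assume "mat_mult T L = L"
  then have "mat_mult (mat_pow T n) L = L" for n
    by (induction n) (simp_all add: mat_mult_assoc)
  with assms show "mat_mult (cesaro T N) L = L"
    by (simp add: fun_eq_iff cesaro_eq mat_mult_divide_left mat_mult_sum_left del: mat_pow.simps)
qed

locale stochastic_matrix =
  fixes T :: "'a::finite \<Rightarrow> 'a \<Rightarrow> real"
  assumes nonneg: "\<And>s t. 0 \<le> T s t"
    and row_sum: "\<And>s. (\<Sum>t\<in>UNIV. T s t) = 1"
begin

lemma mat_pow_nonneg: "0 \<le> mat_pow T n s t"
  by (induction n arbitrary: t) (auto simp: mat_one_def mat_mult_def nonneg intro!: sum_nonneg)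

lemma mat_pow_row_sum: "(\<Sum>t\<in>UNIV. mat_pow T n s t) = 1"
proof (induction n)
  case (Suc n)
  have "(\<Sum>t\<in>UNIV. mat_pow T (Suc n) s t) = (\<Sum>k\<in>UNIV. mat_pow T n s k * (\<Sum>t\<in>UNIV. T k t))"
    by (simp add: mat_mult_def sum_distrib_left) (rule sum.swap)
  with Suc show ?case by (simp add: row_sum)
qed (simp add: mat_one_def)

lemma mat_pow_le_1: "mat_pow T n s t \<le> 1"
proof -
  have "mat_pow T n s t \<le> (\<Sum>t\<in>UNIV. mat_pow T n s t)"
    by (rule member_le_sum) (auto simp: mat_pow_nonneg)
  then show ?thesis by (simp add: mat_pow_row_sum)
qed

lemma cesaro_nonneg: "0 \<le> cesaro T N s t"
  unfolding cesaro_def by (auto intro!: sum_nonneg divide_nonneg_nonneg mat_pow_nonneg)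

lemma cesaro_le_1: "cesaro T N s t \<le> 1"
proof -
  have "(\<Sum>n<N. mat_pow T n s t) \<le> real N"
    using sum_mono[of "{..<N}" "\<lambda>n. mat_pow T n s t" "\<lambda>_. 1"] by (simp add: mat_pow_le_1)
  then show ?thesis by (cases "N = 0") (simp_all add: cesaro_def divide_le_eq_1)
qed

lemma cesaro_row_sum:
  assumes "N > 0" shows "(\<Sum>t\<in>UNIV. cesaro T N s t) = 1"
proof -
  have "(\<Sum>t\<in>UNIV. \<Sum>n<N. mat_pow T n s t) = real N"
    by (subst sum.swap) (simp add: mat_pow_row_sum)
  with assms show ?thesis by (simp add: cesaro_def sum_divide_distrib[symmetric])
qed

lemma cesaro_defect_tendsto_0: "(\<lambda>N. (mat_pow T N s t - mat_one s t) / real N) \<longlonglongrightarrow> 0"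
proof (rule Lim_null_comparison)
  have "\<bar>mat_pow T N s t - mat_one s t\<bar> \<le> 1" for N
    using mat_pow_nonneg[of N s t] mat_pow_le_1[of N s t] by (auto simp: mat_one_def)
  then show "\<forall>\<^sub>F N in sequentially. norm ((mat_pow T N s t - mat_one s t) / real N) \<le> 1 / real N"
    by (simp add: abs_divide divide_right_mono)
qed (rule lim_const_over_n)

definition cesaro_limit_point :: "('a \<Rightarrow> 'a \<Rightarrow> real) \<Rightarrow> bool" where
  "cesaro_limit_point L \<longleftrightarrow> (\<exists>r. strict_mono r \<and> (\<forall>s t. (\<lambda>n. cesaro T (r n) s t) \<longlonglongrightarrow> L s t))"

lemma cesaro_limit_point_invariant:
  assumes "cesaro_limit_point L"
  shows "mat_mult L T = L" and "mat_mult T L = L"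
proof -
  obtain r where r: "strict_mono r" "\<And>s t. (\<lambda>n. cesaro T (r n) s t) \<longlonglongrightarrow> L s t"
    using assms unfolding cesaro_limit_point_def by blast
  have defect: "(\<lambda>n. (mat_pow T (r n) s t - mat_one s t) / real (r n)) \<longlonglongrightarrow> 0" for s t
    using LIMSEQ_subseq_LIMSEQ[OF cesaro_defect_tendsto_0 r(1)] by (simp add: o_def)
  have "(\<lambda>n. mat_mult (cesaro T (r n)) T s t - cesaro T (r n) s t) \<longlonglongrightarrow> mat_mult L T s t - L s t"
    and "(\<lambda>n. mat_mult T (cesaro T (r n)) s t - cesaro T (r n) s t) \<longlonglongrightarrow> mat_mult T L s t - L s t"
    for s t unfolding mat_mult_def by (intro tendsto_intros r)+
  then have "mat_mult L T s t - L s t = 0" "mat_mult T L s t - L s t = 0" for s t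
    unfolding cesaro_mult_diff using defect by (blast intro: LIMSEQ_unique)+
  then show "mat_mult L T = L" and "mat_mult T L = L"
    by (simp_all add: fun_eq_iff)
qed

text \<open>Two limit points \<open>L\<^sub>1, L\<^sub>2\<close> both equal \<open>L\<^sub>1 L\<^sub>2\<close>, since each absorbs Cesaro averages.\<close>
lemma cesaro_limit_point_unique:
  assumes L1: "cesaro_limit_point L1" and L2: "cesaro_limit_point L2"
  shows "L1 = L2"
proof -
  obtain r1 where r1: "strict_mono r1" "\<And>s t. (\<lambda>n. cesaro T (r1 n) s t) \<longlonglongrightarrow> L1 s t"
    using L1 unfolding cesaro_limit_point_def by blast
  obtain r2 where r2: "strict_mono r2" "\<And>s t. (\<lambda>n. cesaro T (r2 n) s t) \<longlonglongrightarrow> L2 s t"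
    using L2 unfolding cesaro_limit_point_def by blast
  have pos: "r1 (Suc n) > 0" "r2 (Suc n) > 0" for n
    using seq_suble[OF r1(1), of "Suc n"] seq_suble[OF r2(1), of "Suc n"] by simp_all
  have lim1: "(\<lambda>n. mat_mult L1 (cesaro T (r2 n)) s t) \<longlonglongrightarrow> mat_mult L1 L2 s t"
    and lim2: "(\<lambda>n. mat_mult (cesaro T (r1 n)) L2 s t) \<longlonglongrightarrow> mat_mult L1 L2 s t" for s t
    unfolding mat_mult_def by (intro tendsto_intros r1 r2)+
  have inv: "mat_mult L1 (cesaro T (r2 (Suc n))) = L1" "mat_mult (cesaro T (r1 (Suc n))) L2 = L2" for n
    by (rule mat_mult_invariant_cesaro(1)[OF pos(2) cesaro_limit_point_invariant(1)[OF L1]],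
        rule mat_mult_invariant_cesaro(2)[OF pos(1) cesaro_limit_point_invariant(2)[OF L2]])
  have "L1 s t = mat_mult L1 L2 s t" "L2 s t = mat_mult L1 L2 s t" for s t
    using LIMSEQ_Suc[OF lim1, of s t] LIMSEQ_Suc[OF lim2, of s t] by (simp_all add: inv LIMSEQ_const_iff)
  then show ?thesis by (simp add: fun_eq_iff)
qed

text \<open>Matrices are embedded into \<open>real^'a^'a\<close> to use Bolzano-Weierstrass there.\<close>
definition cesaro_vec :: "nat \<Rightarrow> real^'a^'a" where
  "cesaro_vec N = (\<chi> s t. cesaro T N s t)"

lemma bounded_cesaro_vec: "bounded (range cesaro_vec)"
proof -
  have "norm (cesaro_vec N) \<le> real CARD('a) * real CARD('a)" for N
  proof -
    have "norm (cesaro_vec N) \<le> (\<Sum>s\<in>UNIV. norm (cesaro_vec N $ s))"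
      by (simp add: norm_vec_def L2_set_le_sum)
    also have "\<dots> \<le> (\<Sum>s\<in>(UNIV::'a set). \<Sum>t\<in>(UNIV::'a set). \<bar>cesaro_vec N $ s $ t\<bar>)"
      by (intro sum_mono norm_le_l1_cart)
    also have "\<dots> \<le> (\<Sum>s\<in>(UNIV::'a set). \<Sum>t\<in>(UNIV::'a set). 1)"
      by (intro sum_mono) (simp add: cesaro_vec_def cesaro_le_1 cesaro_nonneg)
    finally show ?thesis by simp
  qed
  then show ?thesis unfolding bounded_iff by blast
qed

lemma cesaro_limit_point_of_vec:
  assumes "strict_mono r" "(cesaro_vec \<circ> r) \<longlonglongrightarrow> l"
  shows "cesaro_limit_point (\<lambda>s t. l $ s $ t)"
  unfolding cesaro_limit_point_def
proof (intro exI[of _ r] conjI allI)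
  fix s t
  from assms(2) have "(\<lambda>n. cesaro_vec (r n) $ s $ t) \<longlonglongrightarrow> l $ s $ t"
    by (intro tendsto_vec_nth) (simp add: o_def)
  then show "(\<lambda>n. cesaro T (r n) s t) \<longlonglongrightarrow> l $ s $ t" by (simp add: cesaro_vec_def)
qed fact

lemma cesaro_converges_stationary:
  obtains L where "\<And>s t. (\<lambda>N. cesaro T N s t) \<longlonglongrightarrow> L s t" and "mat_mult L T = L"
    and "\<And>s t. 0 \<le> L s t" and "\<And>s. (\<Sum>t\<in>UNIV. L s t) = 1"
proof -
  obtain r l where "strict_mono r" "(cesaro_vec \<circ> r) \<longlonglongrightarrow> l"
    using bounded_imp_convergent_subsequence[OF bounded_cesaro_vec] by blast
  then have L: "cesaro_limit_point (\<lambda>s t. l $ s $ t)" (is "cesaro_limit_point ?L")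
    by (rule cesaro_limit_point_of_vec)
  have "cesaro_vec \<longlonglongrightarrow> l"
    using bounded_cesaro_vec
  proof (rule tendsto_of_bounded_unique_subseq_limit)
    fix r' l' assume "strict_mono r'" "(cesaro_vec \<circ> r') \<longlonglongrightarrow> l'"
    then have "(\<lambda>s t. l' $ s $ t) = ?L"
      using cesaro_limit_point_unique[OF cesaro_limit_point_of_vec L] by blast
    then show "l' = l" by (simp add: vec_eq_iff fun_eq_iff)
  qed
  then have lim: "(\<lambda>N. cesaro T N s t) \<longlonglongrightarrow> ?L s t" for s t
    using tendsto_vec_nth[OF tendsto_vec_nth[of cesaro_vec l sequentially s], of t]
    by (simp add: cesaro_vec_def[abs_def])
  have "(\<lambda>N. \<Sum>t\<in>UNIV. cesaro T (Suc N) s t) \<longlonglongrightarrow> (\<Sum>t\<in>UNIV. ?L s t)" for s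
    by (intro tendsto_intros LIMSEQ_Suc lim)
  then have "(\<Sum>t\<in>UNIV. ?L s t) = 1" for s
    by (simp add: cesaro_row_sum LIMSEQ_const_iff)
  moreover have "0 \<le> ?L s t" for s t
    using lim by (rule LIMSEQ_le_const) (simp add: cesaro_nonneg)
  ultimately show thesis
    using lim cesaro_limit_point_invariant(1)[OF L] by (intro that[of ?L])
qed

end

section \<open>Stationary distributions of a match\<close>

lemma sum_UNIV_outcome: "(\<Sum>t\<in>UNIV. f t) = f CC + f CD + f DC + (f DD :: real)"
  by (simp add: UNIV_outcome)

definition stationary :: "('a::finite \<Rightarrow> 'a \<Rightarrow> real) \<Rightarrow> ('a \<Rightarrow> real) \<Rightarrow> bool" where
  "stationary T \<pi> \<longleftrightarrow>
     (\<forall>t. 0 \<le> \<pi> t) \<and> (\<Sum>t\<in>UNIV. \<pi> t) = 1 \<and> (\<forall>t. \<pi> t = (\<Sum>s\<in>UNIV. \<pi> s * T s t))"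

lemma stationary_nonneg: "stationary T \<pi> \<Longrightarrow> 0 \<le> \<pi> t"
  and stationary_balance: "stationary T \<pi> \<Longrightarrow> \<pi> t = (\<Sum>s\<in>UNIV. \<pi> s * T s t)"
  unfolding stationary_def by blast+

lemma stationary_outcome_sum: "stationary T \<pi> \<Longrightarrow> \<pi> CC + \<pi> CD + \<pi> DC + \<pi> DD = 1"
  unfolding stationary_def by (metis sum_UNIV_outcome)

lemma trans_prob_stochastic:
  assumes "memvec_ok p" "memvec_ok q"
  shows "stochastic_matrix (trans_prob p q)"
proof
  show "0 \<le> trans_prob p q s t" for s t
    using assms unfolding memvec_ok_def trans_prob_def by (intro mult_nonneg_nonneg) auto
  show "(\<Sum>t\<in>UNIV. trans_prob p q s t) = 1" for s
    by (simp add: sum_UNIV_outcome trans_prob_def algebra_simps)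
qed

lemma outcome_dist_eq_mat_pow:
  "outcome_dist sx sy n t = mat_pow (trans_prob (fst sx) (fst sy)) n (mk_outcome (snd sx) (snd sy)) t"
  by (induction n arbitrary: t) (auto simp: mat_one_def mat_mult_def)

lemma avg_payoff_stationary:
  assumes "memvec_ok (fst sx)" "memvec_ok (fst sy)"
  obtains \<pi> where "stationary (trans_prob (fst sx) (fst sy)) \<pi>"
    and "avg_payoff R P sx sy = (\<Sum>t\<in>UNIV. \<pi> t * S_X R P t)"
proof -
  define T where "T = trans_prob (fst sx) (fst sy)"
  define s0 where "s0 = mk_outcome (snd sx) (snd sy)"
  interpret stochastic_matrix T
    unfolding T_def by (rule trans_prob_stochastic[OF assms])
  obtain L where lim: "\<And>s t. (\<lambda>N. cesaro T N s t) \<longlonglongrightarrow> L s t" and inv: "mat_mult L T = L"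
    and nonneg: "\<And>s t. 0 \<le> L s t" and rows: "\<And>s. (\<Sum>t\<in>UNIV. L s t) = 1"
    using cesaro_converges_stationary by blast
  have "(\<Sum>n<N. \<Sum>t\<in>UNIV. outcome_dist sx sy n t * S_X R P t) / real N
      = (\<Sum>t\<in>UNIV. cesaro T N s0 t * S_X R P t)" for N
    by (simp add: outcome_dist_eq_mat_pow T_def[symmetric] s0_def[symmetric] cesaro_def
        sum_divide_distrib sum_distrib_right sum.swap[of _ "{..<N}"] del: mat_pow.simps)
  moreover have "(\<lambda>N. \<Sum>t\<in>UNIV. cesaro T N s0 t * S_X R P t) \<longlonglongrightarrow> (\<Sum>t\<in>UNIV. L s0 t * S_X R P t)"
    by (intro tendsto_intros lim)
  ultimately have "avg_payoff R P sx sy = (\<Sum>t\<in>UNIV. L s0 t * S_X R P t)"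
    unfolding avg_payoff_def by (simp add: limI)
  moreover have "stationary T (L s0)"
    unfolding stationary_def using nonneg rows fun_cong[OF fun_cong[OF inv, of s0]]
    by (simp add: mat_mult_def)
  ultimately show thesis using that by (simp add: T_def)
qed

lemma avg_payoff_absorbing:
  assumes "\<And>t. trans_prob (fst sx) (fst sy) (mk_outcome (snd sx) (snd sy)) t
             = (if t = mk_outcome (snd sx) (snd sy) then 1 else 0)"
  shows "avg_payoff R P sx sy = S_X R P (mk_outcome (snd sx) (snd sy))"
proof -
  let ?s0 = "mk_outcome (snd sx) (snd sy)"
  have dist: "outcome_dist sx sy n t = (if t = ?s0 then 1 else 0)" for n t
  proof (induction n arbitrary: t)
    case (Suc n)
    have "outcome_dist sx sy (Suc n) t = (\<Sum>s\<in>UNIV. if s = ?s0 then trans_prob (fst sx) (fst sy) ?s0 t else 0)"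
      unfolding outcome_dist.simps Suc.IH by (rule sum.cong) auto
    then show ?case by (simp add: assms)
  qed simp
  have "(\<Sum>t\<in>UNIV. outcome_dist sx sy n t * S_X R P t) = (\<Sum>t\<in>UNIV. if t = ?s0 then S_X R P ?s0 else 0)" for n
    unfolding dist by (rule sum.cong) auto
  then have "(\<Sum>n<N. \<Sum>t\<in>UNIV. outcome_dist sx sy n t * S_X R P t) / real N = real N * S_X R P ?s0 / real N" for N
    by simp
  moreover have "(\<lambda>N. real (Suc N) * S_X R P ?s0 / real (Suc N)) \<longlonglongrightarrow> S_X R P ?s0"
    by simp
  then have "(\<lambda>N. real N * S_X R P ?s0 / real N) \<longlonglongrightarrow> S_X R P ?s0"
    by (rule LIMSEQ_imp_Suc)
  ultimately show ?thesis
    unfolding avg_payoff_def by (simp add: limI)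
qed

section \<open>Press-Dyson identities and zero-determinant strategies\<close>

lemma trans_prob_own_coop: "trans_prob p q s CC + trans_prob p q s CD = p s"
  and trans_prob_other_coop: "trans_prob p q s CC + trans_prob p q s DC = q (swap_out s)"
  by (simp_all add: trans_prob_def algebra_simps)

lemma S_X_swap_out: "S_X R P (swap_out s) = S_Y R P s"
  and S_Y_swap_out: "S_Y R P (swap_out s) = S_X R P s"
  by (cases s; simp)+

text \<open>Summing the balance equations at \<open>cc\<close> and \<open>cd\<close> (resp. \<open>cc\<close> and \<open>dc\<close>) yields the
  cooperation frequency of X (resp. Y), which each player's own vector also computes.\<close>
lemma stationary_press_dyson:
  assumes "stationary (trans_prob p q) \<pi>"
  shows "(\<Sum>s\<in>UNIV. \<pi> s * press_dyson p s) = 0"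
    and "(\<Sum>s\<in>UNIV. \<pi> s * press_dyson q (swap_out s)) = 0"
proof -
  note eq = stationary_balance[OF assms]
  have "\<pi> CC + \<pi> CD = (\<Sum>s\<in>UNIV. \<pi> s * (trans_prob p q s CC + trans_prob p q s CD))"
    and "\<pi> CC + \<pi> DC = (\<Sum>s\<in>UNIV. \<pi> s * (trans_prob p q s CC + trans_prob p q s DC))"
    by (subst (1 2) eq, simp add: distrib_left sum.distrib)+
  then have "\<pi> CC + \<pi> CD = (\<Sum>s\<in>UNIV. \<pi> s * p s)"
    and "\<pi> CC + \<pi> DC = (\<Sum>s\<in>UNIV. \<pi> s * q (swap_out s))"
    by (simp_all only: trans_prob_own_coop trans_prob_other_coop)
  then show "(\<Sum>s\<in>UNIV. \<pi> s * press_dyson p s) = 0"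
    and "(\<Sum>s\<in>UNIV. \<pi> s * press_dyson q (swap_out s)) = 0"
    by (simp_all add: sum_UNIV_outcome press_dyson_def algebra_simps)
qed

lemma expected_affine_payoff:
  assumes "stationary T \<pi>"
  shows "(\<Sum>s\<in>UNIV. \<pi> s * (\<alpha> * S_X R P s + \<beta> * S_Y R P s + \<gamma>))
    = \<alpha> * (\<Sum>t\<in>UNIV. \<pi> t * S_X R P t) + \<beta> * (\<Sum>t\<in>UNIV. \<pi> t * S_Y R P t) + \<gamma>"
proof -
  from stationary_outcome_sum[OF assms] have "\<gamma> = \<gamma> * (\<pi> CC + \<pi> CD + \<pi> DC + \<pi> DD)"
    by simp
  then show ?thesis
    by (simp add: sum_UNIV_outcome algebra_simps)
qed

lemma zero_determinant_enforces:
  assumes st: "stationary (trans_prob p q) \<pi>"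
  shows "(\<And>s. press_dyson p s = \<alpha> * S_X R P s + \<beta> * S_Y R P s + \<gamma>) \<Longrightarrow>
      \<alpha> * (\<Sum>t\<in>UNIV. \<pi> t * S_X R P t) + \<beta> * (\<Sum>t\<in>UNIV. \<pi> t * S_Y R P t) + \<gamma> = 0"
    and "(\<And>s. press_dyson q s = \<alpha> * S_X R P s + \<beta> * S_Y R P s + \<gamma>) \<Longrightarrow>
      \<alpha> * (\<Sum>t\<in>UNIV. \<pi> t * S_Y R P t) + \<beta> * (\<Sum>t\<in>UNIV. \<pi> t * S_X R P t) + \<gamma> = 0"
proof -
  assume "\<And>s. press_dyson p s = \<alpha> * S_X R P s + \<beta> * S_Y R P s + \<gamma>"
  then show "\<alpha> * (\<Sum>t\<in>UNIV. \<pi> t * S_X R P t) + \<beta> * (\<Sum>t\<in>UNIV. \<pi> t * S_Y R P t) + \<gamma> = 0"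
    using stationary_press_dyson(1)[OF st] by (simp only: expected_affine_payoff[OF st])
next
  assume "\<And>s. press_dyson q s = \<alpha> * S_X R P s + \<beta> * S_Y R P s + \<gamma>"
  then have "press_dyson q (swap_out s) = \<beta> * S_X R P s + \<alpha> * S_Y R P s + \<gamma>" for s
    by (simp add: S_X_swap_out S_Y_swap_out)
  then have "(\<Sum>s\<in>UNIV. \<pi> s * press_dyson q (swap_out s))
      = \<beta> * (\<Sum>t\<in>UNIV. \<pi> t * S_X R P t) + \<alpha> * (\<Sum>t\<in>UNIV. \<pi> t * S_Y R P t) + \<gamma>"
    by (simp only: expected_affine_payoff[OF st])
  with stationary_press_dyson(2)[OF st]
  show "\<alpha> * (\<Sum>t\<in>UNIV. \<pi> t * S_Y R P t) + \<beta> * (\<Sum>t\<in>UNIV. \<pi> t * S_X R P t) + \<gamma> = 0"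
    by linarith
qed

lemma stationary_DD_lt_1_of_nonfirm:
  assumes st: "stationary (trans_prob p q) \<pi>" and "memvec_ok p" "memvec_ok q" "\<not> firm p"
  shows "\<pi> DD < 1"
proof (rule ccontr)
  assume "\<not> \<pi> DD < 1"
  with stationary_outcome_sum[OF st] stationary_nonneg[OF st, of CC]
    stationary_nonneg[OF st, of CD] stationary_nonneg[OF st, of DC]
  have \<pi>: "\<pi> DD = 1" "\<pi> CC = 0" "\<pi> CD = 0" "\<pi> DC = 0"
    by linarith+
  have "\<pi> DD = (\<Sum>s\<in>UNIV. \<pi> s * trans_prob p q s DD)"
    by (rule stationary_balance[OF st])
  also have "\<dots> = (1 - p DD) * (1 - q DD)"
    using \<pi> by (simp add: sum_UNIV_outcome trans_prob_def)
  finally have "(1 - p DD) * (1 - q DD) = 1"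
    using \<pi> by simp
  moreover have "0 < p DD" "p DD \<le> 1" "0 \<le> q DD"
    using assms(2-4) unfolding memvec_ok_def firm_def by (auto simp: less_le)
  then have "(1 - p DD) * (1 - q DD) \<le> 1 - p DD"
    by (intro mult_left_le) auto
  ultimately show False
    using \<open>0 < p DD\<close> by linarith
qed

lemma expected_payoff_lt_P:
  assumes "stationary T \<pi>" and "\<pi> CC = 0" "\<pi> DC = 0" "\<pi> DD < 1" and "0 < P"
  shows "(\<Sum>t\<in>UNIV. \<pi> t * S_X R P t) < P"
  using assms by (simp add: sum_UNIV_outcome)

lemma stationary_DD_eq_1_of_payoff_sum_le:
  assumes st: "stationary T \<pi>" and "P < R" "P < 1/2"
    and le: "(\<Sum>t\<in>UNIV. \<pi> t * S_X R P t) + (\<Sum>t\<in>UNIV. \<pi> t * S_Y R P t) \<le> 2 * P"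
  shows "\<pi> DD = 1"
proof -
  note nonneg = stationary_nonneg[OF st] and sum1 = stationary_outcome_sum[OF st]
  have "(\<Sum>t\<in>UNIV. \<pi> t * S_X R P t) + (\<Sum>t\<in>UNIV. \<pi> t * S_Y R P t)
      - 2 * P * (\<pi> CC + \<pi> CD + \<pi> DC + \<pi> DD)
      = 2 * (R - P) * \<pi> CC + (1 - 2 * P) * (\<pi> CD + \<pi> DC)"
    by (simp add: sum_UNIV_outcome algebra_simps)
  with le have "2 * (R - P) * \<pi> CC + (1 - 2 * P) * (\<pi> CD + \<pi> DC) \<le> 0"
    unfolding sum1 by linarith
  moreover have "0 \<le> 2 * (R - P) * \<pi> CC" "0 \<le> (1 - 2 * P) * (\<pi> CD + \<pi> DC)"
    using assms nonneg by simp_all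
  ultimately have "2 * (R - P) * \<pi> CC = 0" "(1 - 2 * P) * (\<pi> CD + \<pi> DC) = 0"
    by linarith+
  then have "\<pi> CC = 0" "\<pi> CD + \<pi> DC = 0"
    using assms by simp_all
  with sum1 nonneg[of CD] nonneg[of DC] show ?thesis by linarith
qed

section \<open>Payoffs against the resident strategies\<close>

lemma stationary_against_sticky_defection:
  assumes st: "stationary (trans_prob p q) \<pi>" and "memvec_ok q"
    and q: "q CD < 1" "q DC = 0" "q DD = 0"
  shows "\<pi> DC = 0" and "\<pi> CC * (1 - q CC) = 0"
proof -
  have "\<pi> CC * (1 - q CC) + \<pi> DC * (1 - q CD) = 0"
    using stationary_press_dyson(2)[OF st] q
    by (simp add: sum_UNIV_outcome press_dyson_def algebra_simps)
  moreover have "0 \<le> \<pi> CC * (1 - q CC)" "0 \<le> \<pi> DC * (1 - q CD)"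
    using stationary_nonneg[OF st] \<open>memvec_ok q\<close> q unfolding memvec_ok_def by simp_all
  ultimately have "\<pi> CC * (1 - q CC) = 0" "\<pi> DC * (1 - q CD) = 0"
    by linarith+
  with q show "\<pi> DC = 0" and "\<pi> CC * (1 - q CC) = 0"
    by simp_all
qed

lemma avg_payoff_lt_P_vs_sticky_defector:
  assumes ok: "memvec_ok (fst sx)" "memvec_ok (fst sy)"
    and q: "fst sy CC < 1" "fst sy CD < 1" "fst sy DC = 0" "fst sy DD = 0"
    and "\<not> firm (fst sx)" and "0 < P"
  shows "avg_payoff R P sx sy < P"
proof -
  obtain \<pi> where st: "stationary (trans_prob (fst sx) (fst sy)) \<pi>"
    and payoff: "avg_payoff R P sx sy = (\<Sum>t\<in>UNIV. \<pi> t * S_X R P t)"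
    using avg_payoff_stationary[OF ok] by blast
  have "\<pi> DC = 0" "\<pi> CC = 0"
    using stationary_against_sticky_defection[OF st ok(2) q(2-4)] q(1) by simp_all
  with st assms show ?thesis
    unfolding payoff by (intro expected_payoff_lt_P stationary_DD_lt_1_of_nonfirm)
qed

lemma avg_payoff_self_sticky_defector:
  assumes ok: "memvec_ok (fst s)"
    and p: "fst s CC < 1" "fst s CD < 1" "fst s DC = 0" "fst s DD = 0"
  shows "avg_payoff R P s s = P"
proof -
  obtain \<pi> where st: "stationary (trans_prob (fst s) (fst s)) \<pi>"
    and payoff: "avg_payoff R P s s = (\<Sum>t\<in>UNIV. \<pi> t * S_X R P t)"
    using avg_payoff_stationary[OF ok ok] by blast
  have CC: "\<pi> CC = 0" and DC: "\<pi> DC = 0"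
    using stationary_against_sticky_defection[OF st ok p(2-4)] p(1) by simp_all
  then have "\<pi> CD * (1 - fst s CD) = 0"
    using stationary_press_dyson(1)[OF st] p
    by (simp add: sum_UNIV_outcome press_dyson_def algebra_simps)
  then have "\<pi> CD = 0"
    using p(2) by simp
  with CC DC stationary_outcome_sum[OF st] show ?thesis
    unfolding payoff by (simp add: sum_UNIV_outcome)
qed

lemma avg_payoff_lt_P_vs_agreeable_sticky_defector:
  assumes ok: "memvec_ok (fst sx)" "memvec_ok (fst sy)"
    and q: "fst sy CC = 1" "fst sy CD < 1" "fst sy DC = 0" "fst sy DD = 0"
    and "\<not> agreeable (fst sx)" "\<not> firm (fst sx)" and "0 < P"
  shows "avg_payoff R P sx sy < P"
proof -
  obtain \<pi> where st: "stationary (trans_prob (fst sx) (fst sy)) \<pi>"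
    and payoff: "avg_payoff R P sx sy = (\<Sum>t\<in>UNIV. \<pi> t * S_X R P t)"
    using avg_payoff_stationary[OF ok] by blast
  have DC: "\<pi> DC = 0"
    using stationary_against_sticky_defection[OF st ok(2) q(2-4)] by simp
  have "\<pi> CC = (\<Sum>s\<in>UNIV. \<pi> s * trans_prob (fst sx) (fst sy) s CC)"
    by (rule stationary_balance[OF st])
  also have "\<dots> = \<pi> CC * fst sx CC"
    using DC q by (simp add: sum_UNIV_outcome trans_prob_def)
  finally have "\<pi> CC * (1 - fst sx CC) = 0"
    by (simp add: algebra_simps)
  moreover have "fst sx CC < 1"
    using ok(1) \<open>\<not> agreeable (fst sx)\<close> unfolding memvec_ok_def agreeable_def
    by (metis less_eq_real_def)
  ultimately have "\<pi> CC = 0"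
    by simp
  with DC st assms show ?thesis
    unfolding payoff by (intro expected_payoff_lt_P stationary_DD_lt_1_of_nonfirm)
qed

text \<open>The self-play of \<open>(1, p\<^sub>2, 0, 0)\<close> is not ergodic: the initial outcome,
  \<open>cc\<close> or \<open>dd\<close>, is repeated forever.\<close>
lemma avg_payoff_self_agreeable_sticky_defector:
  assumes p: "fst s CC = 1" "fst s DC = 0" "fst s DD = 0" and "P < R"
  shows "P \<le> avg_payoff R P s s"
proof -
  have s0: "mk_outcome (snd s) (snd s) = (if snd s then CC else DD)"
    by (simp add: mk_outcome_def)
  have "trans_prob (fst s) (fst s) (mk_outcome (snd s) (snd s)) t
      = (if t = mk_outcome (snd s) (snd s) then 1 else 0)" for t
    by (cases "snd s"; cases t) (simp_all add: mk_outcome_def p trans_prob_def)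
  then have "avg_payoff R P s s = S_X R P (mk_outcome (snd s) (snd s))"
    by (rule avg_payoff_absorbing)
  with \<open>P < R\<close> show ?thesis
    by (simp add: s0)
qed

lemma nonexc_ZD_abar_neg_coeffs:
  assumes "nonexc_ZD_abar R P p abar" "abar < 0"
  obtains \<alpha> \<beta> \<gamma> where "\<And>s. press_dyson p s = \<alpha> * S_X R P s + \<beta> * S_Y R P s + \<gamma>"
    and "0 < \<gamma>" "\<alpha> < 0"
  using assms unfolding nonexc_ZD_abar_def by (auto simp: divide_less_0_iff)

lemma firm_zero_determinant_coeffs:
  assumes "memvec_ok q" and zd: "\<And>s. press_dyson q s = \<alpha> * S_X R P s + \<beta> * S_Y R P s + \<gamma>"
    and "q DD = 0" "0 < \<gamma>" "0 < P" "P < 1/2"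
  shows "\<beta> < 0" "\<beta> < \<alpha>" "\<gamma> = - (\<alpha> + \<beta>) * P"
proof -
  have "q CD = 1 + \<beta> + \<gamma>" "q DC = \<alpha> + \<gamma>" "q DD = \<alpha> * P + \<beta> * P + \<gamma>"
    using zd[of CD] zd[of DC] zd[of DD] by (simp_all add: press_dyson_def)
  moreover have "q CD \<le> 1" "0 \<le> q DC"
    using \<open>memvec_ok q\<close> unfolding memvec_ok_def by auto
  ultimately have "\<beta> + \<gamma> \<le> 0" "- \<gamma> \<le> \<alpha>" and \<gamma>: "\<gamma> = - (\<alpha> + \<beta>) * P"
    using \<open>q DD = 0\<close> by (simp_all add: algebra_simps)
  then show "\<beta> < 0" "\<gamma> = - (\<alpha> + \<beta>) * P"
    using \<open>0 < \<gamma>\<close> by simp_all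
  have "P * (\<alpha> - \<beta>) = 2 * P * \<alpha> + \<gamma>"
    using \<gamma> by (simp add: algebra_simps)
  also have "\<dots> \<ge> \<gamma> * (1 - 2 * P)"
    using mult_left_mono[OF \<open>- \<gamma> \<le> \<alpha>\<close>, of P] \<open>0 < P\<close> by (simp add: algebra_simps)
  finally have "\<gamma> * (1 - 2 * P) \<le> P * (\<alpha> - \<beta>)" .
  moreover have "0 < \<gamma> * (1 - 2 * P)"
    using \<open>0 < \<gamma>\<close> \<open>P < 1/2\<close> by simp
  ultimately have "0 < P * (\<alpha> - \<beta>)"
    by linarith
  with \<open>0 < P\<close> show "\<beta> < \<alpha>"
    by (simp add: zero_less_mult_iff)
qed

lemma avg_payoff_lt_P_vs_firm_zero_determinant:
  assumes ok: "memvec_ok (fst sx)" "memvec_ok (fst sy)"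
    and zd: "\<And>s. press_dyson (fst sy) s = \<alpha> * S_X R P s + \<beta> * S_Y R P s + \<gamma>"
    and "fst sy DD = 0" "0 < \<gamma>" "\<alpha> < 0"
    and "\<not> firm (fst sx)" and P: "0 < P" "P < 1/2" "P < R"
  shows "avg_payoff R P sx sy < P"
proof (rule ccontr)
  obtain \<pi> where st: "stationary (trans_prob (fst sx) (fst sy)) \<pi>"
    and payoff: "avg_payoff R P sx sy = (\<Sum>t\<in>UNIV. \<pi> t * S_X R P t)"
    using avg_payoff_stationary[OF ok] by blast
  define x y where "x = (\<Sum>t\<in>UNIV. \<pi> t * S_X R P t)" and "y = (\<Sum>t\<in>UNIV. \<pi> t * S_Y R P t)"
  note coeffs = firm_zero_determinant_coeffs[OF ok(2) zd \<open>fst sy DD = 0\<close> \<open>0 < \<gamma>\<close> P(1,2)]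
  assume "\<not> avg_payoff R P sx sy < P"
  then have "0 \<le> x - P"
    by (simp add: payoff x_def)
  have "\<alpha> * y + \<beta> * x + \<gamma> = 0"
    unfolding x_def y_def by (rule zero_determinant_enforces(2)[OF st zd])
  then have "\<alpha> * ((x - P) + (y - P)) = (\<alpha> - \<beta>) * (x - P)"
    using coeffs(3) by (simp add: algebra_simps)
  also have "\<dots> \<ge> 0"
    using coeffs(2) \<open>0 \<le> x - P\<close> by simp
  finally have "x + y \<le> 2 * P"
    using \<open>\<alpha> < 0\<close> by (simp add: zero_le_mult_iff)
  then have "\<pi> DD = 1"
    unfolding x_def y_def using st P by (intro stationary_DD_eq_1_of_payoff_sum_le)
  moreover have "\<pi> DD < 1"
    using st ok assms by (intro stationary_DD_lt_1_of_nonfirm)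
  ultimately show False
    by simp
qed

lemma avg_payoff_self_firm_zero_determinant:
  assumes ok: "memvec_ok (fst s)"
    and zd: "\<And>t. press_dyson (fst s) t = \<alpha> * S_X R P t + \<beta> * S_Y R P t + \<gamma>"
    and "fst s DD = 0" "0 < \<gamma>" "\<alpha> < 0" and P: "0 < P" "P < 1/2"
  shows "avg_payoff R P s s = P"
proof -
  obtain \<pi> where st: "stationary (trans_prob (fst s) (fst s)) \<pi>"
    and payoff: "avg_payoff R P s s = (\<Sum>t\<in>UNIV. \<pi> t * S_X R P t)"
    using avg_payoff_stationary[OF ok ok] by blast
  define x y where "x = (\<Sum>t\<in>UNIV. \<pi> t * S_X R P t)" and "y = (\<Sum>t\<in>UNIV. \<pi> t * S_Y R P t)"
  note coeffs = firm_zero_determinant_coeffs[OF ok zd \<open>fst s DD = 0\<close> \<open>0 < \<gamma>\<close> P]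
  have X: "\<alpha> * x + \<beta> * y + \<gamma> = 0" and Y: "\<alpha> * y + \<beta> * x + \<gamma> = 0"
    unfolding x_def y_def by (rule zero_determinant_enforces[OF st zd])+
  have "(\<alpha> - \<beta>) * (x - y) = (\<alpha> * x + \<beta> * y + \<gamma>) - (\<alpha> * y + \<beta> * x + \<gamma>)"
    by (simp add: algebra_simps)
  with X Y coeffs(2) have "x = y"
    by simp
  have "(\<alpha> + \<beta>) * (x - P) = \<alpha> * x + \<beta> * y + \<gamma>"
    using \<open>x = y\<close> coeffs(3) by (simp add: algebra_simps)
  with X have "(\<alpha> + \<beta>) * (x - P) = 0"
    by simp
  moreover have "\<alpha> + \<beta> \<noteq> 0"
    using \<open>\<alpha> < 0\<close> coeffs(1) by simp
  ultimately show ?thesis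
    by (simp add: payoff x_def)
qed

lemma ESS_of_threshold:
  assumes "\<And>j. j \<in> I \<Longrightarrow> j \<noteq> istar \<Longrightarrow> A j istar < c" and "c \<le> A istar istar"
  shows "ESS I A istar"
  using assms unfolding ESS_def by (meson less_le_trans)

lemma ESS_sticky_defector:
  assumes ok: "\<forall>j\<in>I. memvec_ok (fst (\<sigma> j))" and "istar \<in> I"
    and p: "fst (\<sigma> istar) CC < 1" "fst (\<sigma> istar) CD < 1" "fst (\<sigma> istar) DC = 0" "fst (\<sigma> istar) DD = 0"
    and mutants: "\<forall>j\<in>I. j \<noteq> istar \<longrightarrow> \<not> firm (fst (\<sigma> j))" and "0 < P"
  shows "ESS I (\<lambda>i j. avg_payoff R P (\<sigma> i) (\<sigma> j)) istar"
proof (rule ESS_of_threshold)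
  have ok_istar: "memvec_ok (fst (\<sigma> istar))"
    using ok \<open>istar \<in> I\<close> by blast
  show "avg_payoff R P (\<sigma> j) (\<sigma> istar) < P" if "j \<in> I" "j \<noteq> istar" for j
    using avg_payoff_lt_P_vs_sticky_defector[OF _ ok_istar p] ok mutants \<open>0 < P\<close> that by blast
  show "P \<le> avg_payoff R P (\<sigma> istar) (\<sigma> istar)"
    using avg_payoff_self_sticky_defector[OF ok_istar p] by simp
qed

lemma ESS_agreeable_sticky_defector:
  assumes ok: "\<forall>j\<in>I. memvec_ok (fst (\<sigma> j))" and "istar \<in> I"
    and p: "fst (\<sigma> istar) CC = 1" "fst (\<sigma> istar) CD < 1" "fst (\<sigma> istar) DC = 0" "fst (\<sigma> istar) DD = 0"
    and mutants: "\<forall>j\<in>I. j \<noteq> istar \<longrightarrow> \<not> agreeable (fst (\<sigma> j)) \<and> \<not> firm (fst (\<sigma> j))"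
    and "0 < P" "P < R"
  shows "ESS I (\<lambda>i j. avg_payoff R P (\<sigma> i) (\<sigma> j)) istar"
proof (rule ESS_of_threshold)
  have ok_istar: "memvec_ok (fst (\<sigma> istar))"
    using ok \<open>istar \<in> I\<close> by blast
  show "avg_payoff R P (\<sigma> j) (\<sigma> istar) < P" if "j \<in> I" "j \<noteq> istar" for j
    using avg_payoff_lt_P_vs_agreeable_sticky_defector[OF _ ok_istar p] ok mutants \<open>0 < P\<close> that by blast
  show "P \<le> avg_payoff R P (\<sigma> istar) (\<sigma> istar)"
    using avg_payoff_self_agreeable_sticky_defector[OF p(1,3,4) \<open>P < R\<close>] .
qed

lemma ESS_firm_zero_determinant:
  assumes ok: "\<forall>j\<in>I. memvec_ok (fst (\<sigma> j))" and "istar \<in> I"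
    and zd: "nonexc_ZD_abar R P (fst (\<sigma> istar)) abar" "abar < 0" and "firm (fst (\<sigma> istar))"
    and mutants: "\<forall>j\<in>I. j \<noteq> istar \<longrightarrow> \<not> firm (fst (\<sigma> j))"
    and P: "0 < P" "P < 1/2" "P < R"
  shows "ESS I (\<lambda>i j. avg_payoff R P (\<sigma> i) (\<sigma> j)) istar"
proof (rule ESS_of_threshold)
  have ok_istar: "memvec_ok (fst (\<sigma> istar))"
    using ok \<open>istar \<in> I\<close> by blast
  have DD: "fst (\<sigma> istar) DD = 0"
    using \<open>firm (fst (\<sigma> istar))\<close> by (simp add: firm_def)
  obtain \<alpha> \<beta> \<gamma> where
    coeffs: "\<And>s. press_dyson (fst (\<sigma> istar)) s = \<alpha> * S_X R P s + \<beta> * S_Y R P s + \<gamma>"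
    and "0 < \<gamma>" "\<alpha> < 0"
    using nonexc_ZD_abar_neg_coeffs[OF zd] by blast
  show "avg_payoff R P (\<sigma> j) (\<sigma> istar) < P" if "j \<in> I" "j \<noteq> istar" for j
    using avg_payoff_lt_P_vs_firm_zero_determinant[OF _ ok_istar coeffs DD \<open>0 < \<gamma>\<close> \<open>\<alpha> < 0\<close> _ P] ok mutants that
    by blast
  show "P \<le> avg_payoff R P (\<sigma> istar) (\<sigma> istar)"
    using avg_payoff_self_firm_zero_determinant[OF ok_istar coeffs DD \<open>0 < \<gamma>\<close> \<open>\<alpha> < 0\<close> P(1,2)] by simp
qed

theorem theorem4p9:
  fixes R P :: real and I :: "'i set" and \<sigma> :: "'i \<Rightarrow> strategy" and istar :: 'i
  assumes payoffs: "0 < P" "P < R" "R < 1" "2 * R > 1"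
    and finI: "finite I" and istarI: "istar \<in> I"
    and valid: "\<forall>j\<in>I. memvec_ok (fst (\<sigma> j))"
  shows
    "((\<exists>p1 p2. fst (\<sigma> istar) CC = p1 \<and> fst (\<sigma> istar) CD = p2 \<and>
              fst (\<sigma> istar) DC = 0 \<and> fst (\<sigma> istar) DD = 0 \<and> p1 < 1 \<and> p2 < 1)
       \<and> (\<forall>j\<in>I. j \<noteq> istar \<longrightarrow> \<not> firm (fst (\<sigma> j)))
       \<longrightarrow> ESS I (\<lambda>i j. avg_payoff R P (\<sigma> i) (\<sigma> j)) istar)
   \<and> ((\<exists>p2. fst (\<sigma> istar) CC = 1 \<and> fst (\<sigma> istar) CD = p2 \<and>
              fst (\<sigma> istar) DC = 0 \<and> fst (\<sigma> istar) DD = 0 \<and> p2 < 1)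
       \<and> (\<forall>j\<in>I. j \<noteq> istar \<longrightarrow> \<not> agreeable (fst (\<sigma> j)) \<and> \<not> firm (fst (\<sigma> j)))
       \<longrightarrow> ESS I (\<lambda>i j. avg_payoff R P (\<sigma> i) (\<sigma> j)) istar)
   \<and> (P < 1/2 \<and> firm (fst (\<sigma> istar))
       \<and> (\<exists>abar. nonexc_ZD_abar R P (fst (\<sigma> istar)) abar \<and> abar < 0)
       \<and> (\<forall>j\<in>I. j \<noteq> istar \<longrightarrow> \<not> firm (fst (\<sigma> j)))
       \<longrightarrow> ESS I (\<lambda>i j. avg_payoff R P (\<sigma> i) (\<sigma> j)) istar)"
  using ESS_sticky_defector[OF valid istarI] ESS_agreeable_sticky_defector[OF valid istarI] ESS_firm_zero_determinant[OF valid istarI] payoffs(1,2)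
  by blast

end
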